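(* Let $X$ be a continuous random variable with probability density function $f$ whose support is the interval $(L,R)$, $-\infty\le L<R\le\infty$, and suppose $f$ is decreasing on $(L,R)$. Then for every $p\in\mathcal{D}=\{p\ge1:E[|X|^{p-1}]<\infty\}$, with $\nu_p$ the $p$-mean of $X$ and $H_p=\int_0^{\nu_p-L} y^{p-1} f(\nu_p-y)\,dy$, the density $\frac{1}{H_p}y^{p-1}f(\nu_p+y)\mathbf{1}_{(0,R-\nu_p)}(y)$ exhibits strict stochastic dominance over the density $\frac{1}{H_p}y^{p-1}f(\nu_p-y)\mathbf{1}_{(0,\nu_p-L)}(y)$.
   Context: For $p\ge 1$ and a continuous random variable $X$ with $E[|X|^{p-1}]<\infty$, the $p$-mean $\nu_p$ is the unique real solution $\nu$ of $E[(X-\nu)_+^{p-1}]=E[(\nu-X)_+^{p-1}]$; equivalently $\int_0^{\nu_p-L} y^{p-1} f(\nu_p-y)\,dy=\int_0^{R-\nu_p} y^{p-1} f(\nu_p+y)\,dy$. A distribution with CDF $F_Y$ exhibits strict stochastic dominance over one with CDF $F_Z$ if $F_Z(x)\ge F_Y(x)$ for all $x$ and $F_Z\not\equiv F_Y$. *)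

theory Defs
  imports "HOL-Probability.Probability"
begin

text \<open>Power y^a for y \<ge> 0 with the convention 0^0 = 1.\<close>
definition rpow :: "real \<Rightarrow> real \<Rightarrow> real" where
  "rpow y a = (if a = 0 then 1 else y powr a)"

text \<open>Positive-part power (x)_+^a = x^a for x > 0 and 0 for x \<le> 0
  (so that for p = 1 the p-mean is the median).\<close>
definition ppos :: "real \<Rightarrow> real \<Rightarrow> real" where
  "ppos x a = (if x > 0 then x powr a else 0)"

definition p_mean :: "'a measure \<Rightarrow> ('a \<Rightarrow> real) \<Rightarrow> real \<Rightarrow> real" where
  "p_mean M X p = (THE \<nu>. (\<integral>\<omega>. ppos (X \<omega> - \<nu>) (p - 1) \<partial>M)
                         = (\<integral>\<omega>. ppos (\<nu> - X \<omega>) (p - 1) \<partial>M))"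

definition strictly_dominates :: "real measure \<Rightarrow> real measure \<Rightarrow> bool" where
  "strictly_dominates PY PZ \<longleftrightarrow> (\<forall>x. cdf PZ x \<ge> cdf PY x) \<and> (\<exists>x. cdf PZ x \<noteq> cdf PY x)"

end

(*
  Write a = p - 1.  The p-mean is the zero of \<nu> \<mapsto> E[(X - \<nu>)_+^a] - E[(\<nu> - X)_+^a].  This function
  is continuous, positive at the left end L of the support (which is finite, since f is integrable
  and decreasing), negative for large \<nu>, and strictly decreasing on the support; hence the zero
  exists and is unique.  At \<nu> = \<nu>_p the unnormalised densities P(y) = y^a f(\<nu> + y) and
  Q(y) = y^a f(\<nu> - y) have the same mass H.  As f is strictly decreasing, P < Q as long as \<nu> - y
  stays in the support, and Q = 0 afterwards.  Two densities of equal mass that cross only once in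
  this way have ordered distribution functions, strictly so because P < Q near 0.
*)
theory Submission
  imports Defs
begin

lemma rpow_nonneg: "0 \<le> y \<Longrightarrow> 0 \<le> rpow y a"
  by (simp add: rpow_def)

lemma rpow_pos: "0 < y \<Longrightarrow> 0 < rpow y a"
  by (simp add: rpow_def)

lemma rpow_mono: "0 \<le> a \<Longrightarrow> 0 \<le> x \<Longrightarrow> x \<le> y \<Longrightarrow> rpow x a \<le> rpow y a"
  by (auto simp: rpow_def intro: powr_mono2)

lemma rpow_abs_diff_le:
  assumes "0 \<le> a"
  shows "rpow \<bar>x - v\<bar> a \<le> 2 powr a * (rpow \<bar>x\<bar> a + rpow \<bar>v\<bar> a)"
proof (cases "a = 0")
  case True
  then show ?thesis by (simp add: rpow_def)
next
  case False
  have "rpow \<bar>x - v\<bar> a \<le> rpow (2 * max \<bar>x\<bar> \<bar>v\<bar>) a"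
    using assms by (intro rpow_mono) auto
  also have "\<dots> = 2 powr a * rpow (max \<bar>x\<bar> \<bar>v\<bar>) a"
    using False by (simp add: rpow_def powr_mult)
  also have "rpow (max \<bar>x\<bar> \<bar>v\<bar>) a \<le> rpow \<bar>x\<bar> a + rpow \<bar>v\<bar> a"
    by (cases "\<bar>x\<bar> \<le> \<bar>v\<bar>") (auto simp: max_def rpow_def)
  finally show ?thesis by (simp add: mult_left_mono)
qed

lemma rpow_borel_measurable [measurable]: "(\<lambda>z. rpow z a) \<in> borel_measurable borel"
  unfolding rpow_def by measurable

lemma ppos_nonneg: "0 \<le> ppos z a"
  by (simp add: ppos_def)

lemma ppos_pos: "0 < z \<Longrightarrow> 0 < ppos z a"
  by (simp add: ppos_def)

lemma ppos_eq_0: "z \<le> 0 \<Longrightarrow> ppos z a = 0"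
  by (simp add: ppos_def)

lemma ppos_le_rpow_abs: "ppos z a \<le> rpow \<bar>z\<bar> a"
  by (auto simp: ppos_def rpow_def)

lemma ppos_neg_le_rpow_abs: "ppos (- z) a \<le> rpow \<bar>z\<bar> a"
  using ppos_le_rpow_abs[of "- z" a] by simp

lemma ppos_mono: "0 \<le> a \<Longrightarrow> z \<le> w \<Longrightarrow> ppos z a \<le> ppos w a"
  by (auto simp: ppos_def intro: powr_mono2)

lemma ppos_borel_measurable [measurable]: "(\<lambda>z. ppos z a) \<in> borel_measurable borel"
  unfolding ppos_def by measurable

lemma isCont_ppos:
  assumes "z0 \<noteq> 0"
  shows "isCont (\<lambda>z. ppos z a) z0"
proof (cases "0 < z0")
  case True
  have "\<forall>\<^sub>F z in nhds z0. ppos z a = z powr a"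
    using eventually_nhds_in_open[of "{0<..}" z0] True
    by (auto simp: ppos_def elim!: eventually_mono)
  then show ?thesis
    by (subst isCont_cong) (use True in \<open>auto intro!: continuous_intros\<close>)
next
  case False
  with assms have "\<forall>\<^sub>F z in nhds z0. ppos z a = 0"
    using eventually_nhds_in_open[of "{..<0}" z0]
    by (auto simp: ppos_def elim!: eventually_mono)
  then show ?thesis
    by (subst isCont_cong) auto
qed

lemma ereal_obtain_real_interval:
  fixes A B :: ereal
  assumes "A < B"
  obtains l r :: real where "A < ereal l" "l < r" "ereal r < B"
proof -
  obtain l where l: "A < ereal l" "ereal l < B"
    using ereal_dense2[OF assms] by blast
  obtain r where "ereal l < ereal r" "ereal r < B"
    using ereal_dense2[OF l(2)] by blast
  with l that show ?thesis by simp
qed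

lemma integral_pos_of_pos_on_interval:
  fixes g :: "real \<Rightarrow> real"
  assumes "integrable lborel g" "\<And>x. 0 \<le> g x" "l < r"
    and pos: "\<And>x. l < x \<Longrightarrow> x < r \<Longrightarrow> 0 < g x"
  shows "0 < integral\<^sup>L lborel g"
proof (rule ccontr)
  assume "\<not> 0 < integral\<^sup>L lborel g"
  moreover have "0 \<le> integral\<^sup>L lborel g"
    using assms(2) by simp
  ultimately have "integral\<^sup>L lborel g = 0"
    by simp
  with assms(1,2) have "AE x in lborel. g x = 0"
    by (simp add: integral_nonneg_eq_0_iff_AE)
  then have "AE x in lborel. x \<notin> {l<..<r}"
    by eventually_elim (use pos in force)
  then have "emeasure lborel {l<..<r} = 0"
    by (subst AE_iff_measurable[symmetric, of "{l<..<r}"]) auto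
  with \<open>l < r\<close> show False by simp
qed

lemma cdf_density_eq_set_integral:
  fixes g :: "real \<Rightarrow> real"
  assumes g: "integrable lborel g" "\<And>y. 0 \<le> g y"
  shows "cdf (density lborel (\<lambda>y. ennreal (g y))) x = (\<integral>y\<in>{..x}. g y \<partial>lborel)"
proof -
  have int: "integrable lborel (\<lambda>y. indicator {..x} y * g y)"
    using integrable_real_mult_indicator[OF _ g(1)] by (simp add: mult.commute)
  have "emeasure (density lborel (\<lambda>y. ennreal (g y))) {..x}
      = (\<integral>\<^sup>+y. ennreal (indicator {..x} y * g y) \<partial>lborel)"
    using g by (subst emeasure_density) (auto intro!: nn_integral_cong split: split_indicator)
  also have "\<dots> = ennreal (\<integral>y\<in>{..x}. g y \<partial>lborel)"
    unfolding set_lebesgue_integral_def using int g by (subst nn_integral_eq_integral) auto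
  finally show ?thesis
    using g by (simp add: cdf_def measure_def set_lebesgue_integral_def)
qed

lemma strictly_dominates_density_single_crossing:
  fixes P Q :: "real \<Rightarrow> real" and H l r :: real
  assumes P: "integrable lborel P" "\<And>y. 0 \<le> P y"
    and Q: "integrable lborel Q" "\<And>y. 0 \<le> Q y"
    and same_mass: "integral\<^sup>L lborel P = integral\<^sup>L lborel Q"
    and "0 < H"
    and crossing: "\<And>y z. Q y < P y \<Longrightarrow> y \<le> z \<Longrightarrow> Q z = 0"
    and "l < r" and Q_gt_P: "\<And>y. l < y \<Longrightarrow> y < r \<Longrightarrow> P y < Q y"
  shows "strictly_dominates (density lborel (\<lambda>y. ennreal (P y / H)))
                            (density lborel (\<lambda>y. ennreal (Q y / H)))"
proof -
  have set_int: "set_integrable lborel {..t} P" "set_integrable lborel {..t} Q" for t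
    unfolding set_integrable_def
    using integrable_mult_indicator[OF _ P(1), of "{..t}"] integrable_mult_indicator[OF _ Q(1), of "{..t}"]
    by simp_all
  have cdf: "cdf (density lborel (\<lambda>y. ennreal (g y / H))) t = (\<integral>y\<in>{..t}. g y \<partial>lborel) / H"
    if "integrable lborel g" "\<And>y. 0 \<le> g y" for g t
    using that \<open>0 < H\<close> by (subst cdf_density_eq_set_integral) auto
  have le: "(\<integral>y\<in>{..t}. P y \<partial>lborel) \<le> (\<integral>y\<in>{..t}. Q y \<partial>lborel)" for t
  proof (cases "\<exists>y\<le>t. Q y < P y")
    case True
    then have Q_vanishes: "Q z = 0" if "t < z" for z
      using crossing that by force
    have "(\<integral>y\<in>{..t}. P y \<partial>lborel) \<le> integral\<^sup>L lborel P"
      unfolding set_lebesgue_integral_def using P set_int(1)[unfolded set_integrable_def]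
      by (intro integral_mono) (auto split: split_indicator)
    also have "\<dots> = integral\<^sup>L lborel Q"
      by (rule same_mass)
    also have "\<dots> = (\<integral>y\<in>{..t}. Q y \<partial>lborel)"
      unfolding set_lebesgue_integral_def
      by (intro Bochner_Integration.integral_cong) (auto simp: Q_vanishes split: split_indicator)
    finally show ?thesis .
  next
    case False
    then show ?thesis
      by (intro set_integral_mono set_int) (auto simp: not_less)
  qed
  define m where "m = (l + r) / 2"
  have "l < m" "m < r"
    using \<open>l < r\<close> by (simp_all add: m_def)
  have P_le_Q: "P y \<le> Q y" if "y \<le> m" for y
  proof (rule ccontr)
    assume "\<not> P y \<le> Q y"
    with that have "Q m = 0"
      by (intro crossing) auto
    with Q_gt_P[OF \<open>l < m\<close> \<open>m < r\<close>] P(2)[of m] show False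
      by simp
  qed
  have "0 < (LINT y|lborel. indicator {..m} y * (Q y - P y))"
  proof (rule integral_pos_of_pos_on_interval[OF _ _ \<open>l < m\<close>])
    show "integrable lborel (\<lambda>y. indicator {..m} y * (Q y - P y))"
      using set_int[of m] unfolding set_integrable_def
      by (simp add: right_diff_distrib)
    show "0 \<le> indicator {..m} y * (Q y - P y)" for y
      using P_le_Q[of y] by (simp split: split_indicator)
    show "0 < indicator {..m} y * (Q y - P y)" if "l < y" "y < m" for y
      using Q_gt_P[of y] that \<open>m < r\<close> by simp
  qed
  then have lt: "(\<integral>y\<in>{..m}. P y \<partial>lborel) < (\<integral>y\<in>{..m}. Q y \<partial>lborel)"
    using set_integral_diff(2)[OF set_int(2) set_int(1), of m]
    by (simp add: set_lebesgue_integral_def)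
  show ?thesis
    unfolding strictly_dominates_def cdf[OF P] cdf[OF Q]
    using le lt \<open>0 < H\<close> by (auto intro: divide_right_mono intro!: exI[of _ m])
qed

definition upper_tail_moment :: "(real \<Rightarrow> real) \<Rightarrow> real \<Rightarrow> real \<Rightarrow> real" where
  "upper_tail_moment f a \<nu> = (\<integral>x. f x * ppos (x - \<nu>) a \<partial>lborel)"

definition lower_tail_moment :: "(real \<Rightarrow> real) \<Rightarrow> real \<Rightarrow> real \<Rightarrow> real" where
  "lower_tail_moment f a \<nu> = (\<integral>x. f x * ppos (\<nu> - x) a \<partial>lborel)"

locale finite_moment_density =
  fixes f :: "real \<Rightarrow> real" and a :: real
  assumes f_nonneg: "\<And>x. 0 \<le> f x"
    and f_measurable [measurable]: "f \<in> borel_measurable borel"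
    and f_integrable: "integrable lborel f"
    and moment_integrable: "integrable lborel (\<lambda>x. f x * rpow \<bar>x\<bar> a)"
    and exponent_nonneg: "0 \<le> a"
begin

lemma integrable_moment_majorant:
  "integrable lborel (\<lambda>x. f x * (2 powr a * (rpow \<bar>x\<bar> a + rpow K a)))"
proof -
  have "integrable lborel (\<lambda>x. 2 powr a * (f x * rpow \<bar>x\<bar> a) + (2 powr a * rpow K a) * f x)"
    using moment_integrable f_integrable by auto
  then show ?thesis
    by (simp add: algebra_simps)
qed

context
  fixes k :: "real \<Rightarrow> real"
  assumes k_measurable [measurable]: "k \<in> borel_measurable borel"
    and k_nonneg: "\<And>z. 0 \<le> k z"
    and k_le: "\<And>z. k z \<le> rpow \<bar>z\<bar> a"
begin

lemma shifted_kernel_le_majorant: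
  assumes "\<bar>\<nu>\<bar> \<le> K"
  shows "norm (f x * k (x - \<nu>)) \<le> f x * (2 powr a * (rpow \<bar>x\<bar> a + rpow K a))"
proof -
  have "k (x - \<nu>) \<le> 2 powr a * (rpow \<bar>x\<bar> a + rpow \<bar>\<nu>\<bar> a)"
    using k_le rpow_abs_diff_le[OF exponent_nonneg] by (rule order_trans)
  also have "\<dots> \<le> 2 powr a * (rpow \<bar>x\<bar> a + rpow K a)"
    using assms exponent_nonneg by (intro mult_left_mono add_left_mono rpow_mono) auto
  finally show ?thesis
    using f_nonneg[of x] k_nonneg[of "x - \<nu>"] by (simp add: abs_mult mult_left_mono)
qed

lemma integrable_shifted_kernel: "integrable lborel (\<lambda>x. f x * k (x - \<nu>))"
proof (rule Bochner_Integration.integrable_bound[OF integrable_moment_majorant[of "\<bar>\<nu>\<bar>"]])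
  have "0 \<le> f x * (2 powr a * (rpow \<bar>x\<bar> a + rpow \<bar>\<nu>\<bar> a))" for x
    by (simp add: f_nonneg rpow_nonneg)
  then show "AE x in lborel. norm (f x * k (x - \<nu>))
      \<le> norm (f x * (2 powr a * (rpow \<bar>x\<bar> a + rpow \<bar>\<nu>\<bar> a)))"
    using shifted_kernel_le_majorant[OF order_refl] by (auto intro!: AE_I2)
qed simp

lemma isCont_shifted_kernel_integral:
  assumes k_cont: "\<And>z. z \<noteq> 0 \<Longrightarrow> isCont k z"
  shows "isCont (\<lambda>\<nu>. \<integral>x. f x * k (x - \<nu>) \<partial>lborel) \<nu>0"
proof (rule continuous_at_sequentiallyI)
  fix S :: "nat \<Rightarrow> real"
  assume S: "S \<longlonglongrightarrow> \<nu>0"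
  then have "Bseq S"
    by (rule convergent_imp_Bseq[OF convergentI])
  then obtain K where K: "\<And>n. norm (S n) \<le> K"
    by (auto simp: Bseq_def)
  show "(\<lambda>n. \<integral>x. f x * k (x - S n) \<partial>lborel) \<longlonglongrightarrow> \<integral>x. f x * k (x - \<nu>0) \<partial>lborel"
  proof (rule integral_dominated_convergence[OF _ _ integrable_moment_majorant[of K]])
    show "AE x in lborel. norm (f x * k (x - S n)) \<le> f x * (2 powr a * (rpow \<bar>x\<bar> a + rpow K a))" for n
      using K[of n] by (intro AE_I2 shifted_kernel_le_majorant) auto
    show "AE x in lborel. (\<lambda>n. f x * k (x - S n)) \<longlonglongrightarrow> f x * k (x - \<nu>0)"
      using AE_lborel_singleton[of \<nu>0]
    proof eventually_elim
      case (elim x)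
      then have "isCont k (x - \<nu>0)"
        by (intro k_cont) simp
      then show ?case
        by (intro tendsto_intros isCont_tendsto_compose[where g = k] S)
    qed
  qed auto
qed

end

lemma integrable_upper_tail: "integrable lborel (\<lambda>x. f x * ppos (x - \<nu>) a)"
  by (rule integrable_shifted_kernel[of "\<lambda>z. ppos z a"]) (auto simp: ppos_nonneg ppos_le_rpow_abs)

lemma integrable_lower_tail: "integrable lborel (\<lambda>x. f x * ppos (\<nu> - x) a)"
  using integrable_shifted_kernel[of "\<lambda>z. ppos (- z) a" \<nu>]
  by (simp add: ppos_nonneg ppos_neg_le_rpow_abs)

lemma isCont_upper_tail_moment: "isCont (upper_tail_moment f a) \<nu>"
  unfolding upper_tail_moment_def[abs_def]
  by (rule isCont_shifted_kernel_integral[of "\<lambda>z. ppos z a"])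
     (auto simp: ppos_nonneg ppos_le_rpow_abs isCont_ppos)

lemma isCont_lower_tail_moment: "isCont (lower_tail_moment f a) \<nu>"
proof -
  have "isCont (\<lambda>z. ppos (- z) a) z" if "z \<noteq> 0" for z
    using that
    by (intro isCont_o2[where f = uminus and g = "\<lambda>z. ppos z a"] isCont_ppos continuous_intros) auto
  then have "isCont (\<lambda>\<nu>. \<integral>x. f x * ppos (- (x - \<nu>)) a \<partial>lborel) \<nu>"
    by (intro isCont_shifted_kernel_integral[of "\<lambda>z. ppos (- z) a"])
       (auto simp: ppos_nonneg ppos_neg_le_rpow_abs)
  then show ?thesis
    by (simp add: lower_tail_moment_def[abs_def])
qed

lemma upper_tail_moment_tendsto_0: "(upper_tail_moment f a \<longlongrightarrow> 0) at_top"
proof -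
  have "((\<lambda>\<nu>. \<integral>x. f x * ppos (x - \<nu>) a \<partial>lborel) \<longlongrightarrow> (\<integral>x. 0 \<partial>(lborel :: real measure))) at_top"
  proof (rule integral_dominated_convergence_at_top[where w = "\<lambda>x. f x * rpow \<bar>x\<bar> a"
        and s = "\<lambda>\<nu> x. f x * ppos (x - \<nu>) a" and f = "\<lambda>x. 0"])
    show "integrable lborel (\<lambda>x. f x * rpow \<bar>x\<bar> a)"
      by (rule moment_integrable)
    show "AE x in lborel. ((\<lambda>\<nu>. f x * ppos (x - \<nu>) a) \<longlongrightarrow> 0) at_top"
    proof (intro AE_I2 tendsto_eventually)
      fix x
      show "\<forall>\<^sub>F \<nu> in at_top. f x * ppos (x - \<nu>) a = 0"
        using eventually_ge_at_top[of x] by eventually_elim (simp add: ppos_eq_0)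
    qed
    have bound: "norm (f x * ppos (x - \<nu>) a) \<le> f x * rpow \<bar>x\<bar> a" if "0 \<le> \<nu>" for x \<nu>
    proof -
      have "ppos (x - \<nu>) a \<le> rpow \<bar>x\<bar> a"
        using ppos_mono[OF exponent_nonneg, of "x - \<nu>" x] ppos_le_rpow_abs[of x a] that by linarith
      then show ?thesis
        using f_nonneg[of x] by (simp add: ppos_nonneg mult_left_mono)
    qed
    show "\<forall>\<^sub>F \<nu> in at_top. AE x in lborel. norm (f x * ppos (x - \<nu>) a) \<le> f x * rpow \<bar>x\<bar> a"
      using eventually_ge_at_top[of 0] by eventually_elim (intro AE_I2 bound)
  qed auto
  then show ?thesis
    by (simp add: upper_tail_moment_def[abs_def])
qed

lemma lower_tail_moment_mono:
  assumes "\<nu>1 \<le> \<nu>2"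
  shows "lower_tail_moment f a \<nu>1 \<le> lower_tail_moment f a \<nu>2"
  unfolding lower_tail_moment_def
  using assms f_nonneg exponent_nonneg
  by (intro integral_mono integrable_lower_tail mult_left_mono ppos_mono) auto

end

locale decreasing_density = finite_moment_density +
  fixes L R :: ereal
  assumes support_nonempty: "L < R"
    and f_pos_iff: "\<And>x. 0 < f x \<longleftrightarrow> L < ereal x \<and> ereal x < R"
    and f_strict_antimono: "\<And>x y. L < ereal x \<Longrightarrow> x < y \<Longrightarrow> ereal y < R \<Longrightarrow> f y < f x"
begin

lemma f_eq_0: "\<not> (L < ereal x \<and> ereal x < R) \<Longrightarrow> f x = 0"
  using f_pos_iff[of x] f_nonneg[of x] by auto

text \<open>Otherwise f > f c > 0 on the whole half-line left of c, so f could not be integrable.\<close>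
lemma support_bounded_below: "L \<noteq> -\<infinity>"
proof
  assume L: "L = -\<infinity>"
  obtain c where c: "L < ereal c" "ereal c < R"
    using ereal_dense2[OF support_nonempty] by blast
  then have "0 < f c"
    using f_pos_iff by blast
  then obtain n :: nat where n: "integral\<^sup>L lborel f / f c < real n"
    using reals_Archimedean2 by blast
  have "f c * real n = (\<integral>x. f c * indicator {c - real n<..<c} x \<partial>lborel)"
    by simp
  also have "\<dots> \<le> integral\<^sup>L lborel f"
  proof (rule integral_mono[OF _ f_integrable])
    show "integrable lborel (\<lambda>x. f c * indicator {c - real n<..<c} x)"
      by (intro Bochner_Integration.integrable_mult_right integrable_real_indicator) auto
    show "f c * indicator {c - real n<..<c} x \<le> f x" for x
      using f_strict_antimono[of x c] c L f_nonneg[of x]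
      by (auto split: split_indicator)
  qed
  finally show False
    using n \<open>0 < f c\<close> by (simp add: field_simps)
qed

lemma upper_tail_moment_pos:
  assumes "ereal \<nu> < R"
  shows "0 < upper_tail_moment f a \<nu>"
proof -
  have "max L (ereal \<nu>) < R"
    using assms support_nonempty by simp
  then obtain l r where "max L (ereal \<nu>) < ereal l" "l < r" "ereal r < R"
    by (rule ereal_obtain_real_interval)
  then have lr: "L < ereal l" "\<nu> < l" "l < r" "ereal r < R"
    by simp_all
  show ?thesis
    unfolding upper_tail_moment_def
  proof (rule integral_pos_of_pos_on_interval[OF integrable_upper_tail _ \<open>l < r\<close>])
    show "0 \<le> f x * ppos (x - \<nu>) a" for x
      by (simp add: f_nonneg ppos_nonneg)
    fix x
    assume "l < x" "x < r"
    then have "ereal l < ereal x" "ereal x < ereal r" "\<nu> < x"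
      using lr by simp_all
    then have "L < ereal x" "ereal x < R" "\<nu> < x"
      using lr by (meson less_trans)+
    then show "0 < f x * ppos (x - \<nu>) a"
      using f_pos_iff by (simp add: ppos_pos)
  qed
qed

lemma lower_tail_moment_pos:
  assumes "L < ereal \<nu>"
  shows "0 < lower_tail_moment f a \<nu>"
proof -
  have "L < min R (ereal \<nu>)"
    using assms support_nonempty by simp
  then obtain l r where "L < ereal l" "l < r" "ereal r < min R (ereal \<nu>)"
    by (rule ereal_obtain_real_interval)
  then have lr: "L < ereal l" "l < r" "ereal r < R" "r < \<nu>"
    by simp_all
  show ?thesis
    unfolding lower_tail_moment_def
  proof (rule integral_pos_of_pos_on_interval[OF integrable_lower_tail _ \<open>l < r\<close>])
    show "0 \<le> f x * ppos (\<nu> - x) a" for x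
      by (simp add: f_nonneg ppos_nonneg)
    fix x
    assume "l < x" "x < r"
    then have "ereal l < ereal x" "ereal x < ereal r" "x < \<nu>"
      using lr by simp_all
    then have "L < ereal x" "ereal x < R" "x < \<nu>"
      using lr by (meson less_trans)+
    then show "0 < f x * ppos (\<nu> - x) a"
      using f_pos_iff by (simp add: ppos_pos)
  qed
qed

lemma lower_tail_moment_eq_0:
  assumes "ereal \<nu> \<le> L"
  shows "lower_tail_moment f a \<nu> = 0"
proof -
  have integrand_eq_0: "f x * ppos (\<nu> - x) a = 0" for x
  proof (cases "x < \<nu>")
    case True
    with assms have "ereal x < L"
      by (meson less_ereal.simps(1) order.strict_trans2)
    then show ?thesis
      using f_eq_0[of x] by (auto dest: less_asym)
  qed (simp add: ppos_eq_0)
  then show ?thesis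
    unfolding lower_tail_moment_def integrand_eq_0 by simp
qed

lemma upper_tail_moment_eq_0:
  assumes "R \<le> ereal \<nu>"
  shows "upper_tail_moment f a \<nu> = 0"
proof -
  have integrand_eq_0: "f x * ppos (x - \<nu>) a = 0" for x
  proof (cases "\<nu> < x")
    case True
    with assms have "R < ereal x"
      by (meson less_ereal.simps(1) order.strict_trans1)
    then show ?thesis
      using f_eq_0[of x] by (auto dest: less_asym)
  qed (simp add: ppos_eq_0)
  then show ?thesis
    unfolding upper_tail_moment_def integrand_eq_0 by simp
qed

lemma upper_tail_moment_strict_antimono:
  assumes "L < ereal \<nu>1" "\<nu>1 < \<nu>2" "ereal \<nu>2 < R"
  shows "upper_tail_moment f a \<nu>2 < upper_tail_moment f a \<nu>1"
proof -
  have "0 < (\<integral>x. f x * ppos (x - \<nu>1) a - f x * ppos (x - \<nu>2) a \<partial>lborel)"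
  proof (rule integral_pos_of_pos_on_interval[OF _ _ \<open>\<nu>1 < \<nu>2\<close>])
    show "integrable lborel (\<lambda>x. f x * ppos (x - \<nu>1) a - f x * ppos (x - \<nu>2) a)"
      by (intro Bochner_Integration.integrable_diff integrable_upper_tail)
    show "0 \<le> f x * ppos (x - \<nu>1) a - f x * ppos (x - \<nu>2) a" for x
      using f_nonneg[of x] ppos_mono[OF exponent_nonneg, of "x - \<nu>2" "x - \<nu>1"] assms(2)
      by (simp add: mult_left_mono flip: right_diff_distrib)
    fix x
    assume x: "\<nu>1 < x" "x < \<nu>2"
    with assms have "L < ereal x" "ereal x < R"
      by (meson less_ereal.simps(1) less_trans)+
    with x show "0 < f x * ppos (x - \<nu>1) a - f x * ppos (x - \<nu>2) a"
      using f_pos_iff by (simp add: ppos_pos ppos_eq_0)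
  qed
  then show ?thesis
    unfolding upper_tail_moment_def
    by (simp add: integrable_upper_tail)
qed

lemma balance_point_in_support:
  assumes "upper_tail_moment f a \<nu> = lower_tail_moment f a \<nu>"
  shows "L < ereal \<nu>" "ereal \<nu> < R"
proof -
  show "L < ereal \<nu>"
  proof (rule ccontr)
    assume "\<not> L < ereal \<nu>"
    then have "ereal \<nu> < R"
      using support_nonempty by (simp add: not_less order.strict_trans1)
    with \<open>\<not> L < ereal \<nu>\<close> show False
      using assms upper_tail_moment_pos[of \<nu>] lower_tail_moment_eq_0[of \<nu>] by (simp add: not_less)
  qed
  show "ereal \<nu> < R"
  proof (rule ccontr)
    assume "\<not> ereal \<nu> < R"
    with \<open>L < ereal \<nu>\<close> show False
      using assms upper_tail_moment_eq_0[of \<nu>] lower_tail_moment_pos[of \<nu>] by (simp add: not_less)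
  qed
qed

lemma ex1_balance_point: "\<exists>!\<nu>. upper_tail_moment f a \<nu> = lower_tail_moment f a \<nu>"
proof (rule ex_ex1I)
  obtain l0 where l0: "L = ereal l0"
    using support_bounded_below support_nonempty by (cases L) auto
  obtain \<nu>1 where \<nu>1: "L < ereal \<nu>1"
    using ereal_dense2[OF support_nonempty] by blast
  have "\<forall>\<^sub>F \<nu> in at_top. upper_tail_moment f a \<nu> < lower_tail_moment f a \<nu>1"
    using upper_tail_moment_tendsto_0 lower_tail_moment_pos[OF \<nu>1] by (rule order_tendstoD)
  with eventually_ge_at_top[of "max l0 \<nu>1"]
  have "\<forall>\<^sub>F \<nu> in at_top. max l0 \<nu>1 \<le> \<nu> \<and> upper_tail_moment f a \<nu> < lower_tail_moment f a \<nu>1"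
    by (rule eventually_conj)
  then obtain \<nu>2 where \<nu>2: "max l0 \<nu>1 \<le> \<nu>2" "upper_tail_moment f a \<nu>2 < lower_tail_moment f a \<nu>1"
    unfolding eventually_at_top_linorder by blast
  have "upper_tail_moment f a \<nu>2 - lower_tail_moment f a \<nu>2 \<le> 0"
    using \<nu>2 lower_tail_moment_mono[of \<nu>1 \<nu>2] by simp
  moreover have "0 \<le> upper_tail_moment f a l0 - lower_tail_moment f a l0"
    using l0 support_nonempty upper_tail_moment_pos[of l0] lower_tail_moment_eq_0[of l0] by simp
  ultimately obtain \<nu> where "upper_tail_moment f a \<nu> - lower_tail_moment f a \<nu> = 0"
    using IVT2[of "\<lambda>\<nu>. upper_tail_moment f a \<nu> - lower_tail_moment f a \<nu>" \<nu>2 0 l0] \<nu>2(1)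
    by (auto intro!: isCont_diff isCont_upper_tail_moment isCont_lower_tail_moment)
  then show "\<exists>\<nu>. upper_tail_moment f a \<nu> = lower_tail_moment f a \<nu>"
    by auto
next
  have False if "\<mu> < \<nu>"
    and \<mu>: "upper_tail_moment f a \<mu> = lower_tail_moment f a \<mu>"
    and \<nu>: "upper_tail_moment f a \<nu> = lower_tail_moment f a \<nu>" for \<mu> \<nu>
  proof -
    have "upper_tail_moment f a \<nu> < upper_tail_moment f a \<mu>"
      using balance_point_in_support[OF \<mu>] balance_point_in_support[OF \<nu>] \<open>\<mu> < \<nu>\<close>
      by (intro upper_tail_moment_strict_antimono)
    with \<mu> \<nu> lower_tail_moment_mono[of \<mu> \<nu>] \<open>\<mu> < \<nu>\<close> show False
      by simp
  qed
  then show "\<mu> = \<nu>" if "upper_tail_moment f a \<mu> = lower_tail_moment f a \<mu>"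
    and "upper_tail_moment f a \<nu> = lower_tail_moment f a \<nu>" for \<mu> \<nu>
    using that by (metis linorder_neqE_linordered_idom)
qed

text \<open>For \<nu> = \<nu>_p and scaled by 1/H, these are the densities g+ and g- of the theorem.\<close>

definition upper_profile :: "real \<Rightarrow> real \<Rightarrow> real" where
  "upper_profile \<nu> y = (if 0 < y \<and> ereal (\<nu> + y) < R then rpow y a * f (\<nu> + y) else 0)"

definition lower_profile :: "real \<Rightarrow> real \<Rightarrow> real" where
  "lower_profile \<nu> y = (if 0 < y \<and> L < ereal (\<nu> - y) then rpow y a * f (\<nu> - y) else 0)"

lemma upper_profile_nonneg: "0 \<le> upper_profile \<nu> y"
  by (simp add: upper_profile_def f_nonneg rpow_nonneg)

lemma lower_profile_nonneg: "0 \<le> lower_profile \<nu> y"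
  by (simp add: lower_profile_def f_nonneg rpow_nonneg)

lemma upper_profile_eq: "upper_profile \<nu> y = f (\<nu> + y) * ppos y a"
  using f_eq_0[of "\<nu> + y"] by (auto simp: upper_profile_def ppos_def rpow_def)

lemma lower_profile_eq: "lower_profile \<nu> y = f (\<nu> - y) * ppos y a"
  using f_eq_0[of "\<nu> - y"] by (auto simp: lower_profile_def ppos_def rpow_def)

lemma has_bochner_integral_upper_profile:
  "has_bochner_integral lborel (upper_profile \<nu>) (upper_tail_moment f a \<nu>)"
proof -
  have "has_bochner_integral lborel (\<lambda>x. f x * ppos (x - \<nu>) a) (upper_tail_moment f a \<nu>)"
    unfolding upper_tail_moment_def by (rule has_bochner_integral_integrable[OF integrable_upper_tail])
  then show ?thesis
    using lborel_has_bochner_integral_real_affine_iff[where c = 1 and t = \<nu>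
        and f = "\<lambda>x. f x * ppos (x - \<nu>) a"]
    by (simp add: upper_profile_eq[abs_def])
qed

lemma has_bochner_integral_lower_profile:
  "has_bochner_integral lborel (lower_profile \<nu>) (lower_tail_moment f a \<nu>)"
proof -
  have "has_bochner_integral lborel (\<lambda>x. f x * ppos (\<nu> - x) a) (lower_tail_moment f a \<nu>)"
    unfolding lower_tail_moment_def by (rule has_bochner_integral_integrable[OF integrable_lower_tail])
  then show ?thesis
    using lborel_has_bochner_integral_real_affine_iff[where c = "-1" and t = \<nu>
        and f = "\<lambda>x. f x * ppos (\<nu> - x) a"]
    by (simp add: lower_profile_eq[abs_def])
qed

lemma set_integral_eq_lower_tail_moment:
  "(\<integral>y\<in>{y. 0 < y \<and> L < ereal (\<nu> - y)}. rpow y a * f (\<nu> - y) \<partial>lborel) = lower_tail_moment f a \<nu>"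
proof -
  have "(\<integral>y\<in>{y. 0 < y \<and> L < ereal (\<nu> - y)}. rpow y a * f (\<nu> - y) \<partial>lborel)
      = integral\<^sup>L lborel (lower_profile \<nu>)"
    unfolding set_lebesgue_integral_def lower_profile_def
    by (intro Bochner_Integration.integral_cong) (auto split: split_indicator)
  also have "\<dots> = lower_tail_moment f a \<nu>"
    using has_bochner_integral_lower_profile by (rule has_bochner_integral_integral_eq)
  finally show ?thesis .
qed

lemma upper_profile_less_lower_profile:
  assumes "0 < y" "L < ereal (\<nu> - y)" "ereal (\<nu> + y) < R"
  shows "upper_profile \<nu> y < lower_profile \<nu> y"
proof -
  have "f (\<nu> + y) < f (\<nu> - y)"
    using assms by (intro f_strict_antimono) auto
  with assms show ?thesis
    using rpow_pos[of y a] by (simp add: upper_profile_def lower_profile_def)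
qed

lemma upper_profile_le_lower_profile:
  assumes "L < ereal (\<nu> - y)"
  shows "upper_profile \<nu> y \<le> lower_profile \<nu> y"
proof (cases "0 < y \<and> ereal (\<nu> + y) < R")
  case True
  with assms show ?thesis
    using upper_profile_less_lower_profile by (simp add: less_imp_le)
next
  case False
  then show ?thesis
    using lower_profile_nonneg by (auto simp: upper_profile_def)
qed

lemma lower_profile_vanishes_after_crossing:
  assumes "lower_profile \<nu> y < upper_profile \<nu> y" "y \<le> z"
  shows "lower_profile \<nu> z = 0"
proof -
  have "\<not> L < ereal (\<nu> - y)"
    using assms(1) upper_profile_le_lower_profile by (meson not_less)
  moreover have "ereal (\<nu> - z) \<le> ereal (\<nu> - y)"
    using assms(2) by simp
  ultimately have "\<not> L < ereal (\<nu> - z)"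
    by (meson order.strict_trans2)
  then show ?thesis
    by (simp add: lower_profile_def)
qed

lemma strictly_dominates_profiles:
  assumes balance: "upper_tail_moment f a \<nu> = lower_tail_moment f a \<nu>"
  shows "strictly_dominates
           (density lborel (\<lambda>y. ennreal (upper_profile \<nu> y / lower_tail_moment f a \<nu>)))
           (density lborel (\<lambda>y. ennreal (lower_profile \<nu> y / lower_tail_moment f a \<nu>)))"
proof -
  obtain l where l: "L < ereal l" "l < \<nu>"
    using ereal_dense2[OF balance_point_in_support(1)[OF balance]] by auto
  obtain r where r: "\<nu> < r" "ereal r < R"
    using ereal_dense2[OF balance_point_in_support(2)[OF balance]] by auto
  define t where "t = min (\<nu> - l) (r - \<nu>)"
  have "0 < t"
    using l r by (simp add: t_def)
  show ?thesis
  proof (rule strictly_dominates_density_single_crossing[OF _ upper_profile_nonneg _ lower_profile_nonneg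
        _ lower_tail_moment_pos lower_profile_vanishes_after_crossing \<open>0 < t\<close>])
    show "integrable lborel (upper_profile \<nu>)"
      by (rule integrable.intros[OF has_bochner_integral_upper_profile])
    show "integrable lborel (lower_profile \<nu>)"
      by (rule integrable.intros[OF has_bochner_integral_lower_profile])
    show "integral\<^sup>L lborel (upper_profile \<nu>) = integral\<^sup>L lborel (lower_profile \<nu>)"
      using balance by (simp add: has_bochner_integral_integral_eq[OF has_bochner_integral_upper_profile]
        has_bochner_integral_integral_eq[OF has_bochner_integral_lower_profile])
    show "L < ereal \<nu>"
      by (rule balance_point_in_support(1)[OF balance])
    fix y
    assume "0 < y" "y < t"
    then have "l < \<nu> - y" "\<nu> + y < r"
      by (simp_all add: t_def)
    then have "L < ereal (\<nu> - y)" "ereal (\<nu> + y) < R"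
      using l r by (meson less_ereal.simps(1) less_trans)+
    with \<open>0 < y\<close> show "upper_profile \<nu> y < lower_profile \<nu> y"
      by (rule upper_profile_less_lower_profile)
  qed
qed

end


lemma p_mean_eq_balance_point:
  assumes "distributed M lborel X (\<lambda>x. ennreal (f x))" "\<And>x. 0 \<le> f x"
  shows "p_mean M X p = (THE \<nu>. upper_tail_moment f (p - 1) \<nu> = lower_tail_moment f (p - 1) \<nu>)"
proof -
  have "(\<integral>\<omega>. ppos (X \<omega> - \<nu>) (p - 1) \<partial>M) = upper_tail_moment f (p - 1) \<nu>"
    and "(\<integral>\<omega>. ppos (\<nu> - X \<omega>) (p - 1) \<partial>M) = lower_tail_moment f (p - 1) \<nu>" for \<nu>
    unfolding upper_tail_moment_def lower_tail_moment_def
    using assms by (auto intro!: distributed_integral[symmetric])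
  then show ?thesis
    by (simp add: p_mean_def)
qed

theorem proposition2:
  fixes M :: "'a measure" and X :: "'a \<Rightarrow> real" and f :: "real \<Rightarrow> real"
    and L R :: ereal and p :: real
  assumes "prob_space M"
    and "distributed M lborel X (\<lambda>x. ennreal (f x))"
    and "\<forall>x. f x \<ge> 0"
    and "L < R"
    and "\<forall>x. f x > 0 \<longleftrightarrow> (L < ereal x \<and> ereal x < R)"
    and "\<forall>x y. L < ereal x \<and> x < y \<and> ereal y < R \<longrightarrow> f y < f x"
    and "p \<ge> 1"
    and "integrable M (\<lambda>\<omega>. rpow \<bar>X \<omega>\<bar> (p - 1))"
  shows "let \<nu> = p_mean M X p;
             H = (\<integral>y\<in>{y. 0 < y \<and> L < ereal (\<nu> - y)}. rpow y (p - 1) * f (\<nu> - y) \<partial>lborel);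
             gplus = (\<lambda>y. (if 0 < y \<and> ereal (\<nu> + y) < R then rpow y (p - 1) * f (\<nu> + y) else 0) / H);
             gminus = (\<lambda>y. (if 0 < y \<and> L < ereal (\<nu> - y) then rpow y (p - 1) * f (\<nu> - y) else 0) / H)
         in strictly_dominates (density lborel (\<lambda>y. ennreal (gplus y)))
                               (density lborel (\<lambda>y. ennreal (gminus y)))"
proof -
  interpret prob_space M
    by (rule assms(1))
  have f_nonneg: "\<And>x. 0 \<le> f x"
    using assms(3) by simp
  have "f \<in> borel_measurable borel"
    using distributed_real_measurable[OF _ assms(2)] f_nonneg by simp
  moreover have "integrable lborel f"
    using distributed_integrable[OF assms(2), of "\<lambda>_. 1"] f_nonneg by simp
  moreover have "integrable lborel (\<lambda>x. f x * rpow \<bar>x\<bar> (p - 1))"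
    using distributed_integrable[OF assms(2), of "\<lambda>x. rpow \<bar>x\<bar> (p - 1)"] f_nonneg assms(8) by simp
  ultimately interpret decreasing_density f "p - 1" L R
    using assms(3-7) by unfold_locales auto
  define \<nu> where "\<nu> = p_mean M X p"
  have "upper_tail_moment f (p - 1) \<nu> = lower_tail_moment f (p - 1) \<nu>"
    unfolding \<nu>_def p_mean_eq_balance_point[OF assms(2) f_nonneg]
    by (rule theI'[OF ex1_balance_point])
  from strictly_dominates_profiles[OF this] show ?thesis
    unfolding Let_def \<nu>_def[symmetric] set_integral_eq_lower_tail_moment
    by (simp add: upper_profile_def lower_profile_def)
qed

end
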